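(* Let $(W,S)$ be a chordal Coxeter system, let $(S_1,S_0,S_2)$ be a separation of $S$ such that $S_0$ is a simplex, let $d\in\langle S_2\rangle$ be such that $d^{-1}S_0d\subseteq S_2$, and let $S_*=S_1\cup dS_2d^{-1}$. Then the twisted system $(W,S_* )$ is chordal.
   Context: A Coxeter system $(W,S)$: $W=\langle S\mid (st)^{m(s,t)}\ (m(s,t)<\infty)\rangle$, $m(s,s)=1$, $m(s,t)=m(t,s)\in\{2,\dots,\infty\}$. $\Gamma(W,S)$: labeled graph on $S$ with edge $\{s,t\}$ labeled $m(s,t)$ iff $s\ne t$, $m(s,t)<\infty$; chordal: every cycle of length $\ge4$ in its underlying graph has a chord. A simplex is $A\subseteq S$ with $m(s,t)<\infty$ for all $s,t\in A$. A separation of $S$ is a triple $(S_1,S_0,S_2)$ with $S=S_1\cup S_2$, $S_0=S_1\cap S_2$, $S_1-S_0\ne\emptyset\ne S_2-S_0$, and $m(s,t)=\infty$ for all $s\in S_1-S_0$, $t\in S_2-S_0$. (Under these hypotheses $S_*$ is a set of Coxeter generators of $W$.) *)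

theory Defs
  imports "HOL-Algebra.Algebra"
begin

text \<open>Coxeter exponent m(s,t): the order of s t in W; the value 0 encodes m = infinity.\<close>
definition cox_m :: "('a, 'b) monoid_scheme \<Rightarrow> 'a \<Rightarrow> 'a \<Rightarrow> nat" where
  "cox_m G s t = group.ord G (s \<otimes>\<^bsub>G\<^esub> t)"

definition cox_finite :: "('a, 'b) monoid_scheme \<Rightarrow> 'a \<Rightarrow> 'a \<Rightarrow> bool" where
  "cox_finite G s t \<longleftrightarrow> cox_m G s t \<noteq> 0"

definition word_prod :: "('a, 'b) monoid_scheme \<Rightarrow> 'a list \<Rightarrow> 'a" where
  "word_prod G w = foldr (\<lambda>x y. x \<otimes>\<^bsub>G\<^esub> y) w \<one>\<^bsub>G\<^esub>"

definition alt_word :: "'a \<Rightarrow> 'a \<Rightarrow> nat \<Rightarrow> 'a list" where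
  "alt_word s t n = map (\<lambda>i. if even i then s else t) [0..<n]"

text \<open>Word equivalence in the abstract Coxeter group
  <S | s^2, (st)^m(s,t) for m(s,t) finite> (as monoid presentation; each
  generator is its own inverse, so this is the group presentation).\<close>
inductive cox_eq :: "('a, 'b) monoid_scheme \<Rightarrow> 'a set \<Rightarrow> 'a list \<Rightarrow> 'a list \<Rightarrow> bool"
  for G S where
  refl: "cox_eq G S w w"
| sym: "cox_eq G S u v \<Longrightarrow> cox_eq G S v u"
| trans: "cox_eq G S u v \<Longrightarrow> cox_eq G S v w \<Longrightarrow> cox_eq G S u w"
| ctxt: "cox_eq G S u v \<Longrightarrow> cox_eq G S (x @ u @ y) (x @ v @ y)"
| sq: "s \<in> S \<Longrightarrow> cox_eq G S [s, s] []"
| braid: "s \<in> S \<Longrightarrow> t \<in> S \<Longrightarrow> cox_finite G s t \<Longrightarrow>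
           cox_eq G S (alt_word s t (2 * cox_m G s t)) []"

text \<open>(W,S) is a Coxeter system: S is a generating set of involutions of the group W
  and the canonical surjection from the group presented by
  <S | (st)^m(s,t), m(s,t) finite>, m(s,s)=1, m(s,t) = order of st, is injective,
  i.e. every word over S that is trivial in W is trivial in the presented group.\<close>
definition coxeter_system :: "('a, 'b) monoid_scheme \<Rightarrow> 'a set \<Rightarrow> bool" where
  "coxeter_system G S \<longleftrightarrow> group G \<and> S \<subseteq> carrier G \<and>
     (\<forall>s\<in>S. s \<noteq> \<one>\<^bsub>G\<^esub> \<and> s \<otimes>\<^bsub>G\<^esub> s = \<one>\<^bsub>G\<^esub>) \<and>
     generate G S = carrier G \<and>
     (\<forall>w. set w \<subseteq> S \<longrightarrow> word_prod G w = \<one>\<^bsub>G\<^esub> \<longrightarrow> cox_eq G S w [])"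

definition cox_adj :: "('a, 'b) monoid_scheme \<Rightarrow> 'a \<Rightarrow> 'a \<Rightarrow> bool" where
  "cox_adj G s t \<longleftrightarrow> s \<noteq> t \<and> cox_finite G s t"

definition cox_chordal :: "('a, 'b) monoid_scheme \<Rightarrow> 'a set \<Rightarrow> bool" where
  "cox_chordal G S \<longleftrightarrow>
     (\<forall>vs. distinct vs \<and> length vs \<ge> 4 \<and> set vs \<subseteq> S \<and>
        (\<forall>i < length vs. cox_adj G (vs ! i) (vs ! ((i + 1) mod length vs)))
      \<longrightarrow> (\<exists>i j. i < length vs \<and> j < length vs \<and> i \<noteq> j \<and>
              j \<noteq> (i + 1) mod length vs \<and> i \<noteq> (j + 1) mod length vs \<and>
              cox_adj G (vs ! i) (vs ! j)))"

definition cox_simplex :: "('a, 'b) monoid_scheme \<Rightarrow> 'a set \<Rightarrow> 'a set \<Rightarrow> bool" where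
  "cox_simplex G S A \<longleftrightarrow> A \<subseteq> S \<and> (\<forall>s\<in>A. \<forall>t\<in>A. cox_finite G s t)"

definition cox_separation ::
  "('a, 'b) monoid_scheme \<Rightarrow> 'a set \<Rightarrow> 'a set \<Rightarrow> 'a set \<Rightarrow> 'a set \<Rightarrow> bool" where
  "cox_separation G S S1 S0 S2 \<longleftrightarrow>
     S = S1 \<union> S2 \<and> S0 = S1 \<inter> S2 \<and> S1 - S0 \<noteq> {} \<and> S2 - S0 \<noteq> {} \<and>
     (\<forall>s \<in> S1 - S0. \<forall>t \<in> S2 - S0. \<not> cox_finite G s t)"

end

theory Submission
  imports Defs
begin

text \<open>Let \<open>T = d S\<^sub>2 d\<^sup>-\<^sup>1\<close>. Since \<open>d\<^sup>-\<^sup>1 S\<^sub>0 d \<subseteq> S\<^sub>2\<close>, the simplex \<open>S\<^sub>0\<close> lies in \<open>T\<close>, so the new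
  generating set is the union of \<open>S\<^sub>1\<close> and \<open>T\<close> glued along the clique \<open>S\<^sub>0\<close>, and a clique sum of
  chordal graphs is chordal. Both pieces are chordal: \<open>S\<^sub>1 \<subseteq> S\<close>, and \<open>T\<close> is conjugate to
  \<open>S\<^sub>2 \<subseteq> S\<close>. It remains to see that no \<open>x \<in> S\<^sub>1 - S\<^sub>0\<close> is adjacent to a \<open>v \<in> T - S\<^sub>1\<close>.
  Neither of them lies in the parabolic subgroup \<open>W(S\<^sub>0)\<close> (for \<open>v\<close>, because \<open>d\<^sup>-\<^sup>1 v d\<close> would
  then be a generator in the parabolic subgroup generated by \<open>d\<^sup>-\<^sup>1 S\<^sub>0 d\<close>), and \<open>v \<in> W(S\<^sub>2)\<close>;
  as in the amalgam \<open>W(S\<^sub>1) *\<^bsub>W(S\<^sub>0)\<^esub> W(S\<^sub>2)\<close>, the product \<open>x v\<close> has infinite order.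

  Both facts about \<open>W\<close> are derived from the presentation: \<open>S \<inter> W(R) = R\<close> for \<open>R \<subseteq> S\<close> via
  the dual of Tits' geometric representation, and the infinite order from the action of \<open>W\<close>
  on normal forms of the amalgam.\<close>

context group begin

lemma inv_mult_cancel_left: "g \<in> carrier G \<Longrightarrow> y \<in> carrier G \<Longrightarrow> inv g \<otimes> (g \<otimes> y) = y"
  by (simp add: m_assoc[symmetric])

lemma mult_inv_cancel_left: "g \<in> carrier G \<Longrightarrow> y \<in> carrier G \<Longrightarrow> g \<otimes> (inv g \<otimes> y) = y"
  by (simp add: m_assoc[symmetric])

lemma group_hom_conjugation:
  assumes "g \<in> carrier G"
  shows "group_hom G G (\<lambda>x. g \<otimes> x \<otimes> inv g)"
  unfolding group_hom_def group_hom_axioms_def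
  using assms by (auto intro!: homI simp: is_group m_assoc inv_mult_cancel_left)

lemma conjugate_eq_one_iff:
  assumes "g \<in> carrier G" "x \<in> carrier G"
  shows "g \<otimes> x \<otimes> inv g = \<one> \<longleftrightarrow> x = \<one>"
  using assms by (metis inv_closed m_closed r_inv r_one r_cancel m_assoc one_closed)

lemma ord_conjugate:
  assumes "g \<in> carrier G" "x \<in> carrier G"
  shows "ord (g \<otimes> x \<otimes> inv g) = ord x"
proof -
  interpret conj: group_hom G G "\<lambda>x. g \<otimes> x \<otimes> inv g"
    using group_hom_conjugation[OF assms(1)] .
  have "(g \<otimes> x \<otimes> inv g) [^] n = \<one> \<longleftrightarrow> x [^] n = \<one>" for n :: nat
    using assms by (simp flip: conj.hom_nat_pow add: conjugate_eq_one_iff)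
  then show ?thesis
    using assms by (simp add: ord_unique pow_eq_id)
qed

lemma ord_mult_commute:
  assumes "a \<in> carrier G" "b \<in> carrier G"
  shows "ord (a \<otimes> b) = ord (b \<otimes> a)"
proof -
  have "b \<otimes> a = b \<otimes> (a \<otimes> b) \<otimes> inv b" using assms by (simp add: m_assoc)
  then show ?thesis using assms ord_conjugate by simp
qed

lemma generate_conjugate:
  assumes "g \<in> carrier G" "H \<subseteq> carrier G"
  shows "generate G ((\<lambda>x. g \<otimes> x \<otimes> inv g) ` H) = (\<lambda>x. g \<otimes> x \<otimes> inv g) ` generate G H"
  using group_hom.generate_img[OF group_hom_conjugation[OF assms(1)] assms(2)] .

end

lemma word_prod_Nil [simp]: "word_prod G [] = \<one>\<^bsub>G\<^esub>"
  by (simp add: word_prod_def)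

lemma word_prod_Cons [simp]: "word_prod G (x # w) = x \<otimes>\<^bsub>G\<^esub> word_prod G w"
  by (simp add: word_prod_def)

lemma alt_word_Suc_Suc [simp]: "alt_word s t (Suc (Suc n)) = s # t # alt_word s t n"
proof -
  have "[0..<Suc (Suc n)] = 0 # 1 # map (\<lambda>i. i + 2) [0..<n]"
    by (induction n) auto
  then show ?thesis unfolding alt_word_def by simp
qed

lemma set_alt_word: "set (alt_word s t n) \<subseteq> {s, t}"
  by (auto simp: alt_word_def)

context group begin

lemma word_prod_closed: "set w \<subseteq> carrier G \<Longrightarrow> word_prod G w \<in> carrier G"
  by (induction w) auto

lemma word_prod_append:
  "set u \<subseteq> carrier G \<Longrightarrow> set v \<subseteq> carrier G \<Longrightarrow>
    word_prod G (u @ v) = word_prod G u \<otimes> word_prod G v"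
  by (induction u) (auto simp: m_assoc word_prod_closed)

lemma word_prod_concat_replicate:
  "set w \<subseteq> carrier G \<Longrightarrow> word_prod G (concat (replicate n w)) = word_prod G w [^] n"
proof (induction n)
  case (Suc n)
  have "set (concat (replicate n w)) \<subseteq> carrier G" using Suc.prems by auto
  then show ?case
    using Suc nat_pow_Suc2[of "word_prod G w" n] by (simp add: word_prod_append word_prod_closed)
qed simp

lemma word_prod_alt_word:
  assumes "s \<in> carrier G" "t \<in> carrier G"
  shows "word_prod G (alt_word s t (2 * k)) = (s \<otimes> t) [^] k"
proof (induction k)
  case 0 then show ?case by (simp add: alt_word_def)
next
  case (Suc k)
  then show ?case
    using assms nat_pow_Suc2[of "s \<otimes> t" k] by (simp add: m_assoc)
qed

lemma generate_involutions_word_prod: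
  assumes "H \<subseteq> carrier G" "\<forall>h\<in>H. h \<otimes> h = \<one>" "g \<in> generate G H"
  obtains w where "set w \<subseteq> H" "word_prod G w = g"
proof -
  from assms(3) have "\<exists>w. set w \<subseteq> H \<and> word_prod G w = g"
  proof (induction rule: generate.induct)
    case one then show ?case by (intro exI[of _ "[]"]) simp
  next
    case (incl h) then show ?case using assms by (intro exI[of _ "[h]"]) auto
  next
    case (inv h)
    have "inv h = h" using assms inv by (metis inv_char subsetD)
    then show ?case using assms inv by (intro exI[of _ "[h]"]) auto
  next
    case (eng h1 h2)
    then obtain w1 w2 where "set w1 \<subseteq> H" "word_prod G w1 = h1" "set w2 \<subseteq> H" "word_prod G w2 = h2"
      by blast
    then show ?case using assms by (intro exI[of _ "w1 @ w2"]) (auto simp: word_prod_append)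
  qed
  then show thesis using that by blast
qed

end

lemma coxeter_system_group: "coxeter_system W S \<Longrightarrow> group W"
  by (simp add: coxeter_system_def)

lemma coxeter_system_carrier: "coxeter_system W S \<Longrightarrow> S \<subseteq> carrier W"
  by (simp add: coxeter_system_def)

lemma coxeter_system_involution: "coxeter_system W S \<Longrightarrow> s \<in> S \<Longrightarrow> s \<otimes>\<^bsub>W\<^esub> s = \<one>\<^bsub>W\<^esub>"
  by (simp add: coxeter_system_def)

lemma coxeter_system_relations:
  "coxeter_system W S \<Longrightarrow> set w \<subseteq> S \<Longrightarrow> word_prod W w = \<one>\<^bsub>W\<^esub> \<Longrightarrow> cox_eq W S w []"
  by (simp add: coxeter_system_def)

lemma cox_m_self: "coxeter_system W S \<Longrightarrow> s \<in> S \<Longrightarrow> cox_m W s s = 1"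
  unfolding coxeter_system_def cox_m_def by (simp add: group.ord_id)

lemma cox_m_commute:
  "coxeter_system W S \<Longrightarrow> s \<in> S \<Longrightarrow> t \<in> S \<Longrightarrow> cox_m W s t = cox_m W t s"
  unfolding coxeter_system_def cox_m_def by (auto intro: group.ord_mult_commute)

lemma cox_m_neq_1:
  assumes "coxeter_system W S" "s \<in> S" "t \<in> S" "s \<noteq> t"
  shows "cox_m W s t \<noteq> 1"
proof
  assume "cox_m W s t = 1"
  interpret group W using assms(1) by (rule coxeter_system_group)
  have "s \<in> carrier W" "t \<in> carrier W" using assms coxeter_system_carrier by blast+
  with \<open>cox_m W s t = 1\<close> have "s \<otimes>\<^bsub>W\<^esub> t = s \<otimes>\<^bsub>W\<^esub> s"
    using coxeter_system_involution[OF assms(1,2)] ord_eq_1 unfolding cox_m_def by simp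
  with \<open>s \<in> carrier W\<close> \<open>t \<in> carrier W\<close> assms(4) show False by simp
qed

lemma cox_separation_finite_edge:
  assumes cs: "coxeter_system W S" and sep: "cox_separation W S S1 S0 S2"
    and "s \<in> S" "t \<in> S" "cox_finite W s t"
  shows "{s, t} \<subseteq> S1 \<or> {s, t} \<subseteq> S2"
proof -
  have "cox_finite W t s" using assms cox_m_commute[OF cs] by (simp add: cox_finite_def)
  then show ?thesis using assms by (auto simp: cox_separation_def)
qed

context group begin

lemma cox_adj_commute:
  "u \<in> carrier G \<Longrightarrow> v \<in> carrier G \<Longrightarrow> cox_adj G u v \<longleftrightarrow> cox_adj G v u"
  unfolding cox_adj_def cox_finite_def cox_m_def using ord_mult_commute by metis

lemma cox_adj_conjugate:
  assumes "g \<in> carrier G" "u \<in> carrier G" "v \<in> carrier G"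
  shows "cox_adj G (g \<otimes> u \<otimes> inv g) (g \<otimes> v \<otimes> inv g) \<longleftrightarrow> cox_adj G u v"
proof -
  have "g \<otimes> u \<otimes> inv g \<otimes> (g \<otimes> v \<otimes> inv g) = g \<otimes> (u \<otimes> v) \<otimes> inv g"
    using assms by (simp add: m_assoc inv_mult_cancel_left)
  then have "cox_m G (g \<otimes> u \<otimes> inv g) (g \<otimes> v \<otimes> inv g) = cox_m G u v"
    unfolding cox_m_def using assms ord_conjugate by simp
  moreover have "g \<otimes> u \<otimes> inv g = g \<otimes> v \<otimes> inv g \<longleftrightarrow> u = v"
    using assms by simp
  ultimately show ?thesis unfolding cox_adj_def cox_finite_def by simp
qed

end

section \<open>The geometric representation\<close>

lemma sum_cis_equidistant:
  assumes "n > 1"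
  shows "(\<Sum>k<n. cis (\<phi> + 2 * pi * real k / real n)) = 0"
proof -
  have "(\<Sum>k<n. cis (2 * pi * real k / real n)) = \<Sum>{z::complex. z ^ n = 1}"
    using assms by (intro sum.reindex_bij_betw bij_betw_roots_unity) auto
  then have "cis \<phi> * (\<Sum>k<n. cis (2 * pi * real k / real n)) = 0"
    using sum_roots_unity[OF assms] by simp
  then show ?thesis by (simp add: sum_distrib_left cis_mult)
qed

lemma sum_cos_sin_equidistant:
  assumes "n > 1"
  shows "(\<Sum>k<n. cos (\<phi> + 2 * pi * real k / real n)) = 0"
    and "(\<Sum>k<n. sin (\<phi> + 2 * pi * real k / real n)) = 0"
  using arg_cong[OF sum_cis_equidistant[OF assms, of \<phi>], of Re]
    arg_cong[OF sum_cis_equidistant[OF assms, of \<phi>], of Im]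
  by (simp_all add: Re_sum Im_sum)

definition reflection :: "('a \<Rightarrow> 'a \<Rightarrow> real) \<Rightarrow> 'a \<Rightarrow> ('a \<Rightarrow> real) \<Rightarrow> 'a \<Rightarrow> real" where
  "reflection B s f = (\<lambda>u. f u - 2 * B s u * f s)"

lemma reflection_reflection: "B s s = 1 \<Longrightarrow> reflection B s (reflection B s f) = f"
  by (simp add: reflection_def algebra_simps)

lemma reflection_fixed: "f s = 0 \<Longrightarrow> reflection B s f = f"
  by (simp add: reflection_def)

lemma reflection_pair_power:
  fixes B :: "'a \<Rightarrow> 'a \<Rightarrow> real" and f :: "'a \<Rightarrow> real"
  assumes Baa: "B a a = 1" and Bbb: "B b b = 1"
    and Bab: "B a b = - cos \<theta>" and Bba: "B b a = - cos \<theta>" and sin: "sin \<theta> \<noteq> 0"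
  defines "w \<equiv> \<lambda>n::nat. - f a * cos (n * \<theta>) + (f b + f a * cos \<theta>) / sin \<theta> * sin (n * \<theta>)"
  shows "((reflection B a \<circ> reflection B b) ^^ k) f =
    (\<lambda>u. f u - 2 * (\<Sum>j<k. w (2*j+2)) * B a u - 2 * (\<Sum>j<k. w (2*j+1)) * B b u)"
proof -
  have w_0: "w 0 = - f a" and w_1: "w 1 = f b"
    using sin by (simp_all add: w_def field_simps)
  have w_rec: "w (Suc (Suc n)) = 2 * cos \<theta> * w (Suc n) - w n" for n
  proof -
    define x where "x = real (Suc n) * \<theta>"
    have e: "real (Suc (Suc n)) * \<theta> = x + \<theta>" "real n * \<theta> = x - \<theta>"
      by (simp_all add: algebra_simps x_def)
    have c: "cos (x + \<theta>) = 2 * cos \<theta> * cos x - cos (x - \<theta>)"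
      and s: "sin (x + \<theta>) = 2 * cos \<theta> * sin x - sin (x - \<theta>)"
      by (simp_all add: cos_add cos_diff sin_add sin_diff)
    show ?thesis
      unfolding w_def e c s x_def[symmetric] by (simp add: algebra_simps)
  qed
  define R where "R = reflection B a \<circ> reflection B b"
  \<comment> \<open>\<open>w\<close> solves the recurrence of the values at \<open>a\<close> and \<open>b\<close> along the orbit of \<open>f\<close>\<close>
  have "(R ^^ k) f =
      (\<lambda>u. f u - 2 * (\<Sum>j<k. w (2*j+2)) * B a u - 2 * (\<Sum>j<k. w (2*j+1)) * B b u)
    \<and> (R ^^ k) f a = - w (2*k) \<and> (R ^^ k) f b = w (2*k+1)"
  proof (induction k)
    case 0
    then show ?case using w_0 w_1 by simp
  next
    case (Suc k)
    define F where "F = (R ^^ k) f"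
    have F: "F = (\<lambda>u. f u - 2 * (\<Sum>j<k. w (2*j+2)) * B a u - 2 * (\<Sum>j<k. w (2*j+1)) * B b u)"
      "F a = - w (2*k)" "F b = w (2*k+1)"
      using Suc.IH unfolding F_def by blast+
    define F' where "F' = reflection B b F"
    have F'_a: "F' a = w (2*k+2)"
      unfolding F'_def reflection_def using F Bba w_rec[of "2*k"] by simp
    have F'_b: "F' b = - w (2*k+1)"
      unfolding F'_def reflection_def using F Bbb by simp
    have "reflection B a F' = (\<lambda>u. F u - 2 * B b u * w (2*k+1) - 2 * B a u * w (2*k+2))"
      by (simp add: reflection_def F'_a) (simp add: F'_def reflection_def F(3))
    then have "reflection B a F' = (\<lambda>u. f u - 2 * (\<Sum>j<Suc k. w (2*j+2)) * B a u
        - 2 * (\<Sum>j<Suc k. w (2*j+1)) * B b u)"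
      unfolding F(1) by (simp add: algebra_simps)
    moreover have "reflection B a F' a = - w (2 * Suc k)"
      unfolding reflection_def using F'_a Baa by simp
    moreover have "reflection B a F' b = w (2 * Suc k + 1)"
      unfolding reflection_def using F'_a F'_b Bab w_rec[of "2*k+1"] by simp
    moreover have "(R ^^ Suc k) f = reflection B a F'"
      by (simp add: F'_def F_def R_def)
    ultimately show ?case by simp
  qed
  then show ?thesis unfolding R_def by blast
qed

lemma reflection_pair_order:
  fixes B :: "'a \<Rightarrow> 'a \<Rightarrow> real"
  assumes m: "m \<ge> 2" and "B a a = 1" "B b b = 1"
    and "B a b = - cos (pi / real m)" "B b a = - cos (pi / real m)"
  shows "(reflection B a \<circ> reflection B b) ^^ m = id"
proof
  fix f
  define \<theta> where "\<theta> = pi / m"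
  have "sin \<theta> > 0" using m by (intro sin_gt_zero) (simp_all add: \<theta>_def field_simps)
  define w where "w n = - f a * cos (n * \<theta>) + (f b + f a * cos \<theta>) / sin \<theta> * sin (n * \<theta>)"
    for n :: nat
  have sums_vanish: "(\<Sum>j<m. w (2 * j + r)) = 0" for r :: nat
  proof -
    have "w (2 * j + r) = - f a * cos (r * \<theta> + 2 * pi * real j / real m)
        + (f b + f a * cos \<theta>) / sin \<theta> * sin (r * \<theta> + 2 * pi * real j / real m)" for j
      unfolding w_def \<theta>_def by (simp add: algebra_simps)
    then show ?thesis
      using m by (simp add: sum_subtractf sum_divide_distrib[symmetric] sum_distrib_left[symmetric]
          sum_cos_sin_equidistant)
  qed
  have "((reflection B a \<circ> reflection B b) ^^ m) f =
    (\<lambda>u. f u - 2 * (\<Sum>j<m. w (2*j+2)) * B a u - 2 * (\<Sum>j<m. w (2*j+1)) * B b u)"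
    unfolding w_def by (rule reflection_pair_power) (use assms \<open>sin \<theta> > 0\<close> in \<open>simp_all add: \<theta>_def\<close>)
  then show "((reflection B a \<circ> reflection B b) ^^ m) f = id f"
    using sums_vanish[of 1] sums_vanish[of 2] by simp
qed

text \<open>The dual of Tits' geometric representation, acting on functions \<open>S \<Rightarrow> real\<close>.
  For \<open>m(s,t) = \<infinity>\<close>, encoded as \<open>0\<close>, division by zero yields the customary value \<open>-1\<close>.\<close>
definition cox_form :: "('a, 'b) monoid_scheme \<Rightarrow> 'a \<Rightarrow> 'a \<Rightarrow> real" where
  "cox_form W s t = - cos (pi / real (cox_m W s t))"

definition tits_action :: "('a, 'b) monoid_scheme \<Rightarrow> 'a list \<Rightarrow> ('a \<Rightarrow> real) \<Rightarrow> 'a \<Rightarrow> real" where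
  "tits_action W w = foldr (\<lambda>s g. reflection (cox_form W) s \<circ> g) w id"

lemma tits_action_Nil [simp]: "tits_action W [] = id"
  by (simp add: tits_action_def)

lemma tits_action_Cons [simp]: "tits_action W (s # w) = reflection (cox_form W) s \<circ> tits_action W w"
  by (simp add: tits_action_def)

lemma tits_action_append: "tits_action W (u @ v) = tits_action W u \<circ> tits_action W v"
  by (induction u) auto

lemma tits_action_alt_word:
  "tits_action W (alt_word s t (2 * k)) =
    (reflection (cox_form W) s \<circ> reflection (cox_form W) t) ^^ k"
  by (induction k) (simp_all add: alt_word_def[of _ _ 0] comp_assoc)

lemma cox_form_self: "coxeter_system W S \<Longrightarrow> s \<in> S \<Longrightarrow> cox_form W s s = 1"
  by (simp add: cox_form_def cox_m_self)

lemma tits_action_cox_eq: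
  assumes cs: "coxeter_system W S"
  shows "cox_eq W S u v \<Longrightarrow> tits_action W u = tits_action W v"
proof (induction rule: cox_eq.induct)
  case (ctxt u v x y)
  then show ?case by (simp add: tits_action_append)
next
  case (sq s)
  then show ?case
    using cox_form_self[OF cs] by (simp add: fun_eq_iff reflection_reflection)
next
  case (braid s t)
  show ?case
  proof (cases "s = t")
    case True
    then have "alt_word s t (2 * cox_m W s t) = [s, s]"
      using cox_m_self[OF cs braid(1)] by (simp add: alt_word_def numeral_2_eq_2)
    then show ?thesis
      using cox_form_self[OF cs braid(1)] True by (simp add: fun_eq_iff reflection_reflection)
  next
    case False
    have "cox_m W s t \<noteq> 0" "cox_m W s t \<noteq> 1"
      using braid(3) cox_m_neq_1[OF cs braid(1,2) False] by (simp_all add: cox_finite_def)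
    then have m: "cox_m W s t \<ge> 2" by linarith
    have st: "cox_form W s t = - cos (pi / real (cox_m W s t))"
      by (simp add: cox_form_def)
    have ts: "cox_form W t s = - cos (pi / real (cox_m W s t))"
      using cox_m_commute[OF cs braid(2,1)] unfolding cox_form_def by (rule arg_cong)
    have "(reflection (cox_form W) s \<circ> reflection (cox_form W) t) ^^ cox_m W s t = id"
      using m cox_form_self[OF cs braid(1)] cox_form_self[OF cs braid(2)] st ts
      by (rule reflection_pair_order)
    then show ?thesis by (simp only: tits_action_alt_word tits_action_Nil)
  qed
qed simp_all

lemma coxeter_generator_in_parabolic:
  assumes cs: "coxeter_system W S" and "T \<subseteq> S" "t \<in> S" "t \<in> generate W T"
  shows "t \<in> T"
proof (rule ccontr)
  assume "t \<notin> T"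
  interpret group W using cs by (rule coxeter_system_group)
  have S: "S \<subseteq> carrier W" "\<forall>s\<in>S. s \<otimes>\<^bsub>W\<^esub> s = \<one>\<^bsub>W\<^esub>"
    using coxeter_system_carrier[OF cs] coxeter_system_involution[OF cs] by auto
  obtain w where w: "set w \<subseteq> T" "word_prod W w = t"
    by (rule generate_involutions_word_prod[OF _ _ \<open>t \<in> generate W T\<close>]) (use assms S in auto)
  have "cox_eq W S (t # w) []"
    by (rule coxeter_system_relations[OF cs]) (use w assms S in auto)
  then have "tits_action W (t # w) = tits_action W []"
    by (rule tits_action_cox_eq[OF cs])
  \<comment> \<open>the indicator of \<open>t\<close> is fixed by every reflection in \<open>T\<close>, but not by \<open>t\<close>\<close>
  define f where "f = (\<lambda>u. if u = t then 1 else (0::real))"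
  have "tits_action W w f = f"
    using \<open>set w \<subseteq> T\<close>
  proof (induction w)
    case (Cons s w)
    then have "s \<noteq> t" using \<open>t \<notin> T\<close> by auto
    with Cons show ?case by (simp add: reflection_fixed f_def)
  qed simp
  with fun_cong[OF \<open>tits_action W (t # w) = tits_action W []\<close>, of f]
  have "reflection (cox_form W) t f = f"
    by simp
  then show False
    using cox_form_self[OF cs \<open>t \<in> S\<close>] by (simp add: reflection_def f_def fun_eq_iff)
qed

section \<open>Normal forms in amalgamated products\<close>

fun alternating :: "(bool \<times> 'a) list \<Rightarrow> bool" where
  "alternating (x # y # rs) \<longleftrightarrow> fst x \<noteq> fst y \<and> alternating (y # rs)"
| "alternating _ \<longleftrightarrow> True"

text \<open>Normal forms in the amalgamated product of two copies of \<open>G\<close> (tagged \<open>True\<close> and \<open>False\<close>)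
  over \<open>A\<close>: \<open>(a, [(b\<^sub>1, r\<^sub>1), \<dots>, (b\<^sub>n, r\<^sub>n)])\<close> stands for \<open>a r\<^sub>1 \<cdots> r\<^sub>n\<close>, where \<open>a \<in> A\<close>, the \<open>r\<^sub>i\<close>
  are the chosen representatives of nontrivial right cosets \<open>A r\<^sub>i\<close> and consecutive tags differ.
  \<open>side_act b g\<close> is left multiplication by \<open>g\<close> in copy \<open>b\<close>.\<close>
locale amalgam_normal_forms = group + fixes A assumes A_subgroup: "subgroup A G"
begin

sublocale A: subgroup A G by (rule A_subgroup)

definition coset_rep :: "'a \<Rightarrow> 'a" where
  "coset_rep h = (if h \<in> A then \<one> else (SOME r. r \<in> A #> h))"

definition coset_letters :: "(bool \<times> 'a) list \<Rightarrow> bool" where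
  "coset_letters rs \<longleftrightarrow> (\<forall>x \<in> set rs. snd x \<in> carrier G \<and> snd x \<notin> A \<and> coset_rep (snd x) = snd x)"

definition normal_form :: "'a \<times> (bool \<times> 'a) list \<Rightarrow> bool" where
  "normal_form \<omega> \<longleftrightarrow> fst \<omega> \<in> A \<and> coset_letters (snd \<omega>) \<and> alternating (snd \<omega>)"

definition not_led_by :: "bool \<Rightarrow> (bool \<times> 'a) list \<Rightarrow> bool" where
  "not_led_by b rs \<longleftrightarrow> (case rs of [] \<Rightarrow> True | x # _ \<Rightarrow> fst x \<noteq> b)"

definition unfold_head :: "bool \<Rightarrow> 'a \<times> (bool \<times> 'a) list \<Rightarrow> 'a \<times> (bool \<times> 'a) list" where
  "unfold_head b \<omega> =
    (case snd \<omega> of x # rs \<Rightarrow> if fst x = b then (fst \<omega> \<otimes> snd x, rs) else \<omega> | [] \<Rightarrow> \<omega>)"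

definition fold_head :: "bool \<Rightarrow> 'a \<Rightarrow> (bool \<times> 'a) list \<Rightarrow> 'a \<times> (bool \<times> 'a) list" where
  "fold_head b h rs =
    (h \<otimes> inv (coset_rep h), if coset_rep h = \<one> then rs else (b, coset_rep h) # rs)"

definition side_act :: "bool \<Rightarrow> 'a \<Rightarrow> 'a \<times> (bool \<times> 'a) list \<Rightarrow> 'a \<times> (bool \<times> 'a) list" where
  "side_act b g \<omega> = fold_head b (g \<otimes> fst (unfold_head b \<omega>)) (snd (unfold_head b \<omega>))"

lemma mult_in_A_iff:
  assumes "a \<in> A" "h \<in> carrier G"
  shows "a \<otimes> h \<in> A \<longleftrightarrow> h \<in> A"
proof
  assume "a \<otimes> h \<in> A"
  then have "inv a \<otimes> (a \<otimes> h) \<in> A" using A.m_closed A.m_inv_closed assms by blast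
  moreover have "inv a \<otimes> (a \<otimes> h) = h" using assms A.subset inv_mult_cancel_left by blast
  ultimately show "h \<in> A" by simp
next
  assume "h \<in> A"
  then show "a \<otimes> h \<in> A" using assms A.m_closed by blast
qed

lemma coset_rep_in_coset:
  assumes "h \<in> carrier G"
  shows "\<exists>a\<in>A. coset_rep h = a \<otimes> h"
proof -
  have "coset_rep h \<in> A #> h"
  proof (cases "h \<in> A")
    case True
    then show ?thesis
      using assms A.one_closed coset_join2[OF assms A_subgroup] by (simp add: coset_rep_def)
  next
    case False
    then show ?thesis
      using someI[of "\<lambda>r. r \<in> A #> h", OF rcos_self[OF assms A_subgroup]]
      by (simp add: coset_rep_def)
  qed
  then show ?thesis by (auto simp: r_coset_def)
qed

lemma coset_rep_closed:
  assumes "h \<in> carrier G"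
  shows "coset_rep h \<in> carrier G"
proof -
  obtain a where a: "a \<in> A" "coset_rep h = a \<otimes> h" using coset_rep_in_coset[OF assms] by blast
  have "a \<in> carrier G" using a(1) A.subset by blast
  then show ?thesis using a(2) assms by simp
qed

lemma coset_rep_in_A: "h \<in> A \<Longrightarrow> coset_rep h = \<one>" by (simp add: coset_rep_def)

lemma coset_rep_notin_A:
  assumes "h \<in> carrier G" "h \<notin> A"
  shows "coset_rep h \<notin> A"
proof -
  obtain a where a: "a \<in> A" "coset_rep h = a \<otimes> h" using coset_rep_in_coset[OF assms(1)] by blast
  then show ?thesis using mult_in_A_iff[OF a(1) assms(1)] assms(2) by simp
qed

lemma coset_rep_eq_one_iff:
  assumes "h \<in> carrier G"
  shows "coset_rep h = \<one> \<longleftrightarrow> h \<in> A"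
proof
  assume "coset_rep h = \<one>"
  show "h \<in> A"
  proof (rule ccontr)
    assume "h \<notin> A"
    then have "coset_rep h \<notin> A" by (rule coset_rep_notin_A[OF assms])
    then show False using A.one_closed \<open>coset_rep h = \<one>\<close> by simp
  qed
qed (rule coset_rep_in_A)

lemma coset_rep_mult_left:
  assumes "a \<in> A" "h \<in> carrier G"
  shows "coset_rep (a \<otimes> h) = coset_rep h"
proof (cases "h \<in> A")
  case True
  then show ?thesis using assms A.m_closed by (simp add: coset_rep_in_A)
next
  case False
  have "A #> (a \<otimes> h) = A #> h"
    using assms A.subset coset_join2[OF _ A_subgroup assms(1)] by (simp flip: coset_mult_assoc)
  then show ?thesis using False assms mult_in_A_iff by (simp add: coset_rep_def)
qed

lemma coset_rep_idem:
  assumes "h \<in> carrier G"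
  shows "coset_rep (coset_rep h) = coset_rep h"
proof -
  obtain a where a: "a \<in> A" "coset_rep h = a \<otimes> h" using coset_rep_in_coset[OF assms] by blast
  then have "coset_rep (coset_rep h) = coset_rep (a \<otimes> h)" by simp
  also have "\<dots> = coset_rep h" using coset_rep_mult_left a assms by blast
  finally show ?thesis .
qed

lemma mult_inv_coset_rep:
  assumes "h \<in> carrier G"
  shows "h \<otimes> inv (coset_rep h) \<in> A"
proof -
  obtain a where a: "a \<in> A" "coset_rep h = a \<otimes> h" using coset_rep_in_coset assms by blast
  have ac: "a \<in> carrier G" using a A.subset by auto
  have "h \<otimes> inv (a \<otimes> h) = inv a" using ac assms
    by (simp add: inv_mult_group m_assoc[symmetric])
  then show ?thesis using a A.m_inv_closed by simp
qed

lemma unfold_head_props: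
  assumes "normal_form \<omega>"
  shows "fst (unfold_head b \<omega>) \<in> carrier G" "coset_letters (snd (unfold_head b \<omega>))"
    "alternating (snd (unfold_head b \<omega>))" "not_led_by b (snd (unfold_head b \<omega>))"
proof -
  obtain a rs where w: "\<omega> = (a, rs)" by (cases \<omega>)
  have a: "a \<in> carrier G" "coset_letters rs" "alternating rs"
    using assms A.subset by (auto simp: normal_form_def w)
  have "fst (unfold_head b \<omega>) \<in> carrier G \<and> coset_letters (snd (unfold_head b \<omega>)) \<and>
    alternating (snd (unfold_head b \<omega>)) \<and> not_led_by b (snd (unfold_head b \<omega>))"
  proof (cases rs)
    case Nil then show ?thesis
      using a by (simp add: w unfold_head_def not_led_by_def coset_letters_def)
  next
    case (Cons x rs')
    show ?thesis
    proof (cases "fst x = b")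
      case True
      have "alternating rs'" using a Cons by (cases rs' rule: alternating.cases) auto
      moreover have "not_led_by b rs'" using a Cons True by (cases rs') (auto simp: not_led_by_def)
      ultimately show ?thesis using a Cons True by (auto simp: w unfold_head_def coset_letters_def)
    next
      case False
      then show ?thesis using a Cons by (auto simp: w unfold_head_def not_led_by_def)
    qed
  qed
  then show "fst (unfold_head b \<omega>) \<in> carrier G" "coset_letters (snd (unfold_head b \<omega>))"
    "alternating (snd (unfold_head b \<omega>))" "not_led_by b (snd (unfold_head b \<omega>))" by auto
qed

lemma fold_head_normal_form:
  assumes "h \<in> carrier G" "coset_letters rest" "alternating rest" "not_led_by b rest"
  shows "normal_form (fold_head b h rest)"
proof -
  have "alternating ((b, coset_rep h) # rest)"
    using assms(3,4) by (cases rest) (auto simp: not_led_by_def)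
  moreover have "coset_rep h \<noteq> \<one> \<Longrightarrow> coset_letters ((b, coset_rep h) # rest)"
    using assms coset_rep_closed coset_rep_notin_A coset_rep_idem coset_rep_eq_one_iff
      by (auto simp: coset_letters_def)
  ultimately show ?thesis
    using assms mult_inv_coset_rep by (auto simp: normal_form_def fold_head_def)
qed

lemma unfold_fold_head:
  assumes "h \<in> carrier G" "not_led_by b rest"
  shows "unfold_head b (fold_head b h rest) = (h, rest)"
proof (cases "coset_rep h = \<one>")
  case True
  then show ?thesis
    using assms by (cases rest) (auto simp: unfold_head_def fold_head_def not_led_by_def)
next
  case False
  then show ?thesis
    using assms coset_rep_closed by (simp add: unfold_head_def fold_head_def m_assoc)
qed

lemma fold_unfold_head:
  assumes "normal_form \<omega>"
  shows "fold_head b (fst (unfold_head b \<omega>)) (snd (unfold_head b \<omega>)) = \<omega>"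
proof -
  obtain a rs where w: "\<omega> = (a, rs)" by (cases \<omega>)
  have a: "a \<in> A" "coset_letters rs" "alternating rs" using assms by (auto simp: normal_form_def w)
  have ac: "a \<in> carrier G" using a A.subset by auto
  show ?thesis
  proof (cases rs)
    case Nil then show ?thesis
      using a ac by (simp add: w unfold_head_def fold_head_def coset_rep_in_A)
  next
    case (Cons x rs')
    obtain c r where x: "x = (c, r)" by (cases x)
    have r: "r \<in> carrier G" "r \<notin> A" "coset_rep r = r"
      using a Cons x by (auto simp: coset_letters_def)
    show ?thesis
    proof (cases "c = b")
      case True
      have "coset_rep (a \<otimes> r) = r" using coset_rep_mult_left a r ac by simp
      moreover have "r \<noteq> \<one>" using r A.one_closed by auto
      ultimately show ?thesis
        using True Cons x ac r by (simp add: w unfold_head_def fold_head_def m_assoc)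
    next
      case False
      then show ?thesis
        using Cons x a ac by (simp add: w unfold_head_def fold_head_def coset_rep_in_A)
    qed
  qed
qed

lemma side_act_normal_form: "g \<in> carrier G \<Longrightarrow> normal_form \<omega> \<Longrightarrow> normal_form (side_act b g \<omega>)"
  unfolding side_act_def using unfold_head_props fold_head_normal_form by simp

lemma side_act_mult:
  assumes "g \<in> carrier G" "g' \<in> carrier G" "normal_form \<omega>"
  shows "side_act b g (side_act b g' \<omega>) = side_act b (g \<otimes> g') \<omega>"
proof -
  have "unfold_head b (side_act b g' \<omega>) = (g' \<otimes> fst (unfold_head b \<omega>), snd (unfold_head b \<omega>))"
    unfolding side_act_def using unfold_fold_head unfold_head_props assms by simp
  then show ?thesis unfolding side_act_def using assms unfold_head_props by (simp add: m_assoc)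
qed

lemma side_act_one: "normal_form \<omega> \<Longrightarrow> side_act b \<one> \<omega> = \<omega>"
  unfolding side_act_def using unfold_head_props fold_unfold_head by simp

lemma side_act_in_A:
  assumes "g \<in> A" "normal_form \<omega>"
  shows "side_act b g \<omega> = (g \<otimes> fst \<omega>, snd \<omega>)"
proof -
  obtain a rs where w: "\<omega> = (a, rs)" by (cases \<omega>)
  have a: "a \<in> A" "coset_letters rs" "alternating rs" using assms by (auto simp: normal_form_def w)
  have ac: "a \<in> carrier G" "g \<in> carrier G" using a assms A.subset by auto
  have ga: "g \<otimes> a \<in> A" using a assms A.m_closed by auto
  show ?thesis
  proof (cases rs)
    case Nil then show ?thesis
      using ga ac by (simp add: w side_act_def unfold_head_def fold_head_def coset_rep_in_A)
  next
    case (Cons x rs')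
    obtain c r where x: "x = (c, r)" by (cases x)
    have r: "r \<in> carrier G" "r \<notin> A" "coset_rep r = r"
      using a Cons x by (auto simp: coset_letters_def)
    show ?thesis
    proof (cases "c = b")
      case True
      have "coset_rep (g \<otimes> (a \<otimes> r)) = r"
        using coset_rep_mult_left ga r ac by (simp add: m_assoc[symmetric])
      moreover have "r \<noteq> \<one>" using r A.one_closed by auto
      ultimately show ?thesis
        using True Cons x ac r by (simp add: w side_act_def unfold_head_def fold_head_def m_assoc)
    next
      case False
      then show ?thesis
        using Cons x ga ac
        by (simp add: w side_act_def unfold_head_def fold_head_def coset_rep_in_A)
    qed
  qed
qed

lemma side_act_extends:
  assumes "g \<in> carrier G" "g \<notin> A" "normal_form \<omega>" "not_led_by b (snd \<omega>)"
  shows "snd (side_act b g \<omega>) = (b, coset_rep (g \<otimes> fst \<omega>)) # snd \<omega>"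
proof -
  have unfolded: "unfold_head b \<omega> = \<omega>"
    using assms(4) by (cases "snd \<omega>") (auto simp: unfold_head_def not_led_by_def split: list.splits)
  have ac: "fst \<omega> \<in> A" "fst \<omega> \<in> carrier G" using assms(3) A.subset by (auto simp: normal_form_def)
  have "g \<otimes> fst \<omega> \<notin> A"
  proof
    assume "g \<otimes> fst \<omega> \<in> A"
    then have "g \<otimes> fst \<omega> \<otimes> inv (fst \<omega>) \<in> A" using A.m_closed A.m_inv_closed ac by blast
    then show False using assms ac by (simp add: m_assoc)
  qed
  then have "coset_rep (g \<otimes> fst \<omega>) \<noteq> \<one>" using coset_rep_eq_one_iff assms ac by simp
  then show ?thesis using unfolded by (simp add: side_act_def fold_head_def)
qed

text \<open>Letters outside the carrier act trivially, so that every word acts on normal forms.\<close>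
definition letter_act :: "'a set \<Rightarrow> 'a \<Rightarrow> 'a \<times> (bool \<times> 'a) list \<Rightarrow> 'a \<times> (bool \<times> 'a) list" where
  "letter_act S1 s = (if s \<in> carrier G then side_act (s \<in> S1) s else id)"

definition word_act :: "'a set \<Rightarrow> 'a list \<Rightarrow> 'a \<times> (bool \<times> 'a) list \<Rightarrow> 'a \<times> (bool \<times> 'a) list" where
  "word_act S1 w = foldr (\<lambda>s f. letter_act S1 s \<circ> f) w id"

lemma word_act_Nil [simp]: "word_act S1 [] = id"
  by (simp add: word_act_def)

lemma word_act_Cons [simp]: "word_act S1 (s # w) = letter_act S1 s \<circ> word_act S1 w"
  by (simp add: word_act_def)

lemma word_act_append: "word_act S1 (u @ v) = word_act S1 u \<circ> word_act S1 v"
  by (induction u) auto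

lemma word_act_concat_replicate: "word_act S1 (concat (replicate n w)) = (word_act S1 w) ^^ n"
  by (induction n) (auto simp: word_act_append)

lemma letter_act_normal_form: "normal_form \<omega> \<Longrightarrow> normal_form (letter_act S1 s \<omega>)"
  by (auto simp: letter_act_def side_act_normal_form)

lemma word_act_normal_form: "normal_form \<omega> \<Longrightarrow> normal_form (word_act S1 w \<omega>)"
  by (induction w) (auto simp: letter_act_normal_form)

lemma word_act_side1:
  assumes "S1 \<subseteq> carrier G" "set w \<subseteq> S1" "normal_form \<omega>"
  shows "word_act S1 w \<omega> = side_act True (word_prod G w) \<omega>"
  using assms(2)
proof (induction w)
  case Nil then show ?case using assms(3) by (simp add: side_act_one)
next
  case (Cons s w)
  have sc: "s \<in> carrier G" "set w \<subseteq> carrier G" using Cons.prems assms(1) by auto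
  have "word_act S1 (s # w) \<omega> = side_act True s (side_act True (word_prod G w) \<omega>)"
    using Cons sc by (simp add: letter_act_def)
  also have "\<dots> = side_act True (s \<otimes> word_prod G w) \<omega>"
    using side_act_mult sc word_prod_closed assms(3) by blast
  finally show ?case by simp
qed

lemma word_act_side2:
  assumes "S2 \<subseteq> carrier G" "S1 \<inter> S2 \<subseteq> A" "set w \<subseteq> S2" "normal_form \<omega>"
  shows "word_act S1 w \<omega> = side_act False (word_prod G w) \<omega>"
  using assms(3)
proof (induction w)
  case Nil then show ?case using assms(4) by (simp add: side_act_one)
next
  case (Cons s w)
  have sc: "s \<in> carrier G" "set w \<subseteq> carrier G" "s \<in> S2" using Cons.prems assms(1) by auto
  define \<omega>' where "\<omega>' = side_act False (word_prod G w) \<omega>"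
  have v': "normal_form \<omega>'" unfolding \<omega>'_def
    using side_act_normal_form word_prod_closed sc assms(4) by blast
  have "letter_act S1 s \<omega>' = side_act False s \<omega>'"
  proof (cases "s \<in> S1")
    case True
    then have "s \<in> A" using sc assms(2) by blast
    then show ?thesis using True side_act_in_A v' sc by (simp add: letter_act_def)
  next
    case False
    then show ?thesis using sc by (simp add: letter_act_def)
  qed
  then have "word_act S1 (s # w) \<omega> = side_act False s (side_act False (word_prod G w) \<omega>)"
    using Cons by (simp add: \<omega>'_def)
  also have "\<dots> = side_act False (s \<otimes> word_prod G w) \<omega>"
    using side_act_mult sc word_prod_closed assms(4) by blast
  finally show ?case by simp
qed

lemma word_act_relator:
  assumes "S1 \<subseteq> carrier G" "S2 \<subseteq> carrier G" "S1 \<inter> S2 \<subseteq> A" "normal_form \<omega>"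
    and "word_prod G w = \<one>" "set w \<subseteq> S1 \<or> set w \<subseteq> S2"
  shows "word_act S1 w \<omega> = \<omega>"
  using assms(6)
proof
  assume "set w \<subseteq> S1"
  then show ?thesis using word_act_side1 assms side_act_one by simp
next
  assume "set w \<subseteq> S2"
  then show ?thesis using word_act_side2 assms side_act_one by simp
qed

lemma word_act_cox_eq:
  assumes cs: "coxeter_system G S" and sep: "cox_separation G S S1 S0 S2" and "S0 \<subseteq> A"
  shows "cox_eq G S u v \<Longrightarrow> normal_form \<omega> \<Longrightarrow> word_act S1 u \<omega> = word_act S1 v \<omega>"
proof (induction arbitrary: \<omega> rule: cox_eq.induct)
  case (ctxt u v x y)
  have "normal_form (word_act S1 y \<omega>)" using ctxt.prems word_act_normal_form by blast
  then show ?case using ctxt by (simp add: word_act_append)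
next
  case (sq s)
  have S: "S1 \<subseteq> carrier G" "S2 \<subseteq> carrier G" "S1 \<inter> S2 \<subseteq> A"
    using sep coxeter_system_carrier[OF cs] \<open>S0 \<subseteq> A\<close> by (auto simp: cox_separation_def)
  have "word_prod G [s, s] = \<one>"
    using coxeter_system_involution[OF cs sq(1)] coxeter_system_carrier[OF cs] sq(1) by auto
  moreover have "set [s, s] \<subseteq> S1 \<or> set [s, s] \<subseteq> S2"
    using sep sq(1) by (auto simp: cox_separation_def)
  ultimately have "word_act S1 [s, s] \<omega> = \<omega>" by (rule word_act_relator[OF S sq(2)])
  then show ?case by simp
next
  case (braid s t)
  have S: "S1 \<subseteq> carrier G" "S2 \<subseteq> carrier G" "S1 \<inter> S2 \<subseteq> A"
    using sep coxeter_system_carrier[OF cs] \<open>S0 \<subseteq> A\<close> by (auto simp: cox_separation_def)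
  have "s \<in> carrier G" "t \<in> carrier G" using braid(1,2) coxeter_system_carrier[OF cs] by auto
  then have "word_prod G (alt_word s t (2 * cox_m G s t)) = \<one>"
    by (simp add: word_prod_alt_word cox_m_def)
  moreover have
    "set (alt_word s t (2 * cox_m G s t)) \<subseteq> S1 \<or> set (alt_word s t (2 * cox_m G s t)) \<subseteq> S2"
    using cox_separation_finite_edge[OF cs sep braid(1-3)] set_alt_word[of s t]
      by (meson subset_trans)
  ultimately have "word_act S1 (alt_word s t (2 * cox_m G s t)) \<omega> = \<omega>"
    by (rule word_act_relator[OF S braid(4)])
  then show ?case by simp
qed simp_all

lemma side_act_iterate_length:
  assumes x: "x \<in> carrier G" "x \<notin> A" and y: "y \<in> carrier G" "y \<notin> A"
    and F: "\<And>\<omega>. normal_form \<omega> \<Longrightarrow> F \<omega> = side_act True x (side_act False y \<omega>)"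
  shows "length (snd ((F ^^ k) (\<one>, []))) = 2 * k"
proof -
  have "normal_form ((F ^^ k) (\<one>, [])) \<and> length (snd ((F ^^ k) (\<one>, []))) = 2 * k
    \<and> not_led_by False (snd ((F ^^ k) (\<one>, [])))"
  proof (induction k)
    case 0
    then show ?case by (simp add: normal_form_def coset_letters_def not_led_by_def A.one_closed)
  next
    case (Suc k)
    define \<omega> where "\<omega> = (F ^^ k) (\<one>, [])"
    have \<omega>: "normal_form \<omega>" "length (snd \<omega>) = 2 * k" "not_led_by False (snd \<omega>)"
      using Suc by (simp_all add: \<omega>_def)
    define \<omega>1 where "\<omega>1 = side_act False y \<omega>"
    have \<omega>1: "normal_form \<omega>1" "snd \<omega>1 = (False, coset_rep (y \<otimes> fst \<omega>)) # snd \<omega>"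
      using side_act_normal_form side_act_extends[OF y \<omega>(1,3)] y \<omega> by (simp_all add: \<omega>1_def)
    then have "not_led_by True (snd \<omega>1)" by (simp add: not_led_by_def)
    then have "normal_form (side_act True x \<omega>1)"
      "snd (side_act True x \<omega>1) = (True, coset_rep (x \<otimes> fst \<omega>1)) # snd \<omega>1"
      using side_act_normal_form side_act_extends[OF x \<omega>1(1)] x \<omega>1 by simp_all
    moreover have "(F ^^ Suc k) (\<one>, []) = side_act True x \<omega>1"
      using F \<omega>(1) by (simp add: \<omega>_def \<omega>1_def)
    ultimately show ?case using \<omega>1 \<omega> by (simp add: not_led_by_def)
  qed
  then show ?thesis by blast
qed

\<comment> \<open>\<open>(x y)\<^sup>n\<close> acts on normal forms by adding \<open>2 n\<close> letters, so it is never trivial\<close>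
lemma cox_separation_ord_eq_0:
  assumes cs: "coxeter_system G S" and sep: "cox_separation G S S1 S0 S2" and "S0 \<subseteq> A"
    and x: "x \<in> S1" "x \<notin> A" and y: "y \<in> generate G S2" "y \<notin> A"
  shows "ord (x \<otimes> y) = 0"
proof (rule ccontr)
  assume "ord (x \<otimes> y) \<noteq> 0"
  have S: "S1 \<subseteq> carrier G" "S2 \<subseteq> carrier G" "\<forall>s\<in>S2. s \<otimes> s = \<one>" "S = S1 \<union> S2"
    using sep coxeter_system_carrier[OF cs] coxeter_system_involution[OF cs]
    by (auto simp: cox_separation_def)
  obtain wy where wy: "set wy \<subseteq> S2" "word_prod G wy = y"
    by (rule generate_involutions_word_prod[OF S(2,3) y(1)])
  have xy: "x \<in> carrier G" "y \<in> carrier G" "set (x # wy) \<subseteq> carrier G"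
    using x wy S word_prod_closed by auto
  define u where "u = concat (replicate (ord (x \<otimes> y)) (x # wy))"
  have "word_prod G u = \<one>"
    using word_prod_concat_replicate[OF xy(3)] wy xy by (simp add: u_def)
  moreover have "set u \<subseteq> S" using wy x S by (auto simp: u_def)
  ultimately have "cox_eq G S u []" by (rule coxeter_system_relations[OF cs, rotated])
  then have "word_act S1 u (\<one>, []) = (\<one>, [])"
    using word_act_cox_eq[OF cs sep \<open>S0 \<subseteq> A\<close>]
    by (simp add: normal_form_def coset_letters_def A.one_closed)
  moreover have "word_act S1 (x # wy) \<omega> = side_act True x (side_act False y \<omega>)"
    if "normal_form \<omega>" for \<omega>
    using word_act_side2[OF S(2) _ wy(1) that] wy x xy sep \<open>S0 \<subseteq> A\<close>
    by (simp add: letter_act_def cox_separation_def)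
  then have "length (snd ((word_act S1 (x # wy) ^^ ord (x \<otimes> y)) (\<one>, []))) = 2 * ord (x \<otimes> y)"
    by (rule side_act_iterate_length[OF xy(1) x(2) xy(2) y(2)])
  ultimately show False
    using \<open>ord (x \<otimes> y) \<noteq> 0\<close> by (simp add: u_def word_act_concat_replicate)
qed

end

section \<open>Chordal graphs\<close>

lemma walk_between_separated:
  fixes P Q :: "nat \<Rightarrow> bool"
  assumes no_step: "\<And>k. \<not> (P k \<and> Q (Suc k))" and disjoint: "\<And>k. \<not> (P k \<and> Q k)"
    and "P i" "Q (i + e)"
  shows "\<exists>a. 0 < a \<and> a < e \<and> \<not> P (i + a) \<and> \<not> Q (i + a)"
  using \<open>Q (i + e)\<close>
proof (induction e)
  case 0
  then show ?case using disjoint \<open>P i\<close> by auto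
next
  case (Suc e)
  show ?case
  proof (cases "P (i + e) \<or> Q (i + e)")
    case True
    then show ?thesis using no_step Suc by (metis add_Suc_right less_SucI)
  next
    case False
    then have "e \<noteq> 0" using \<open>P i\<close> by (cases e) auto
    with False show ?thesis by (intro exI[of _ e]) auto
  qed
qed

lemma mod_eq_imp_eq_within:
  fixes a b n :: nat
  assumes "a mod n = b mod n" "a \<le> b" "b < a + n"
  shows "a = b"
proof (rule ccontr)
  assume "a \<noteq> b"
  then have "0 < b - a" using assms(2) by simp
  moreover have "n dvd b - a" using mod_eq_dvd_iff_nat[OF assms(2)] assms(1)[symmetric] by simp
  ultimately have "n \<le> b - a" by (simp add: dvd_imp_le)
  then show False using assms(2,3) by arith
qed

lemma mod_non_adjacent:
  fixes x y n :: nat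
  assumes "x + 2 \<le> y" "y + 2 \<le> x + n"
  shows "x mod n \<noteq> y mod n" "y mod n \<noteq> (x mod n + 1) mod n" "x mod n \<noteq> (y mod n + 1) mod n"
proof -
  show "x mod n \<noteq> y mod n" using mod_eq_imp_eq_within[of x n y] assms by auto
  show "y mod n \<noteq> (x mod n + 1) mod n"
    using mod_eq_imp_eq_within[of "Suc x" n y] assms by (auto simp: mod_Suc_eq)
  have "x mod n = (x + n) mod n" by simp
  then show "x mod n \<noteq> (y mod n + 1) mod n"
    using mod_eq_imp_eq_within[of "Suc y" n "x + n"] assms by (auto simp: mod_Suc_eq)
qed

lemma cycle_separator_positions:
  fixes vs :: "'a list" and E :: "'a \<Rightarrow> 'a \<Rightarrow> bool" and L R :: "'a set"
  assumes n4: "length vs \<ge> 4"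
    and cycle: "\<And>i. i < length vs \<Longrightarrow> E (vs ! i) (vs ! ((i + 1) mod length vs))"
    and no_edge: "\<And>u v. u \<in> L \<Longrightarrow> v \<in> R \<Longrightarrow> \<not> E u v \<and> \<not> E v u"
    and disjoint: "L \<inter> R = {}"
    and i: "i < length vs" "vs ! i \<in> L" and j: "j < length vs" "vs ! j \<in> R"
  obtains p q where "p < length vs" "q < length vs" "p \<noteq> q"
    "q \<noteq> (p + 1) mod length vs" "p \<noteq> (q + 1) mod length vs"
    "vs ! p \<notin> L \<union> R" "vs ! q \<notin> L \<union> R"
proof -
  define n where "n = length vs"
  have "n > 0" using n4 unfolding n_def by linarith
  define P where "P k \<longleftrightarrow> vs ! (k mod n) \<in> L" for k
  define Q where "Q k \<longleftrightarrow> vs ! (k mod n) \<in> R" for k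
  have "E (vs ! (k mod n)) (vs ! (Suc k mod n))" for k
    using cycle[of "k mod n"] \<open>n > 0\<close> by (simp add: n_def mod_Suc_eq)
  then have PQ: "\<not> (P k \<and> Q (Suc k))" "\<not> (Q k \<and> P (Suc k))" "\<not> (P k \<and> Q k)" "\<not> (Q k \<and> P k)" for k
    using no_edge disjoint by (auto simp: P_def Q_def)
  \<comment> \<open>unroll the cycle so that position \<open>j'\<close> of \<open>R\<close> lies strictly between two visits of position \<open>i\<close>\<close>
  define j' where "j' = (if i < j then j else j + n)"
  have "i \<noteq> j" using i j disjoint by auto
  then have j': "i < j'" "j' < i + n" "j' mod n = j" using i j by (auto simp: j'_def n_def)
  have ends: "P i" "Q (i + (j' - i))" "Q j'" "P (j' + (i + n - j'))"
    using i j j' by (simp_all add: P_def Q_def n_def)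
  obtain a where a: "0 < a" "a < j' - i" "\<not> P (i + a)" "\<not> Q (i + a)"
    using walk_between_separated[OF PQ(1) PQ(3) ends(1,2)] by blast
  obtain b where b: "0 < b" "b < i + n - j'" "\<not> Q (j' + b)" "\<not> P (j' + b)"
    using walk_between_separated[OF PQ(2) PQ(4) ends(3,4)] by blast
  have "i + a + 2 \<le> j' + b" "j' + b + 2 \<le> i + a + n" using a b j' by auto
  from mod_non_adjacent[OF this] show ?thesis
    using that[of "(i + a) mod n" "(j' + b) mod n"] \<open>n > 0\<close> a b
    by (simp add: n_def[symmetric] P_def Q_def)
qed

lemma cox_chordal_subset: "cox_chordal G S \<Longrightarrow> T \<subseteq> S \<Longrightarrow> cox_chordal G T"
  unfolding cox_chordal_def by (meson subset_trans)

lemma cox_chordal_image: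
  assumes chordal: "cox_chordal G S" and "inj_on f S"
    and adj: "\<And>u v. u \<in> S \<Longrightarrow> v \<in> S \<Longrightarrow> cox_adj G (f u) (f v) \<longleftrightarrow> cox_adj G u v"
  shows "cox_chordal G (f ` S)"
  unfolding cox_chordal_def
proof (intro allI impI)
  fix vs
  assume vs: "distinct vs \<and> 4 \<le> length vs \<and> set vs \<subseteq> f ` S \<and>
    (\<forall>i<length vs. cox_adj G (vs ! i) (vs ! ((i + 1) mod length vs)))"
  define vs' where "vs' = map (the_inv_into S f) vs"
  have vs'_S: "set vs' \<subseteq> S"
    using vs the_inv_into_into[OF \<open>inj_on f S\<close>] by (auto simp: vs'_def)
  have f_vs': "vs ! i = f (vs' ! i)" if "i < length vs" for i
  proof -
    have "vs ! i \<in> f ` S" using that vs by (meson nth_mem subsetD)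
    then show ?thesis using that by (simp add: vs'_def f_the_inv_into_f[OF \<open>inj_on f S\<close>])
  qed
  have len: "length vs' = length vs" by (simp add: vs'_def)
  have adj': "cox_adj G (vs ! i) (vs ! j) \<longleftrightarrow> cox_adj G (vs' ! i) (vs' ! j)"
    if "i < length vs" "j < length vs" for i j
  proof -
    have "vs' ! i \<in> S" "vs' ! j \<in> S"
      using that len nth_mem[of i vs'] nth_mem[of j vs'] vs'_S by auto
    then show ?thesis using that f_vs' adj by simp
  qed
  have "map f vs' = vs" by (rule nth_equalityI) (simp_all add: len f_vs')
  then have "distinct vs'" using vs by (metis distinct_map)
  moreover have "\<forall>i<length vs'. cox_adj G (vs' ! i) (vs' ! ((i + 1) mod length vs'))"
  proof (intro allI impI)
    fix i assume "i < length vs'"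
    then have "i < length vs" using len by simp
    moreover from this have "(i + 1) mod length vs < length vs" by (intro mod_less_divisor) linarith
    moreover have "cox_adj G (vs ! i) (vs ! ((i + 1) mod length vs))"
      using vs \<open>i < length vs\<close> by simp
    ultimately show "cox_adj G (vs' ! i) (vs' ! ((i + 1) mod length vs'))" using adj' len by simp
  qed
  ultimately have "distinct vs' \<and> 4 \<le> length vs' \<and> set vs' \<subseteq> S \<and>
      (\<forall>i<length vs'. cox_adj G (vs' ! i) (vs' ! ((i + 1) mod length vs')))"
    using vs vs'_S len by simp
  then have "\<exists>i j. i < length vs' \<and> j < length vs' \<and> i \<noteq> j \<and> j \<noteq> (i + 1) mod length vs' \<and>
      i \<noteq> (j + 1) mod length vs' \<and> cox_adj G (vs' ! i) (vs' ! j)"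
    by (rule mp[OF spec[OF chordal[unfolded cox_chordal_def], of vs']])
  then obtain i j where "i < length vs" "j < length vs" "i \<noteq> j"
    "j \<noteq> (i + 1) mod length vs" "i \<noteq> (j + 1) mod length vs" "cox_adj G (vs' ! i) (vs' ! j)"
    using len by auto
  then show "\<exists>i j. i < length vs \<and> j < length vs \<and> i \<noteq> j \<and> j \<noteq> (i + 1) mod length vs \<and>
      i \<noteq> (j + 1) mod length vs \<and> cox_adj G (vs ! i) (vs ! j)"
    using adj' by (intro exI[of _ i] exI[of _ j]) simp
qed

lemma cox_chordal_clique_sum:
  assumes chordal_LC: "cox_chordal G (L \<union> C)" and chordal_CR: "cox_chordal G (C \<union> R)"
    and "L \<inter> R = {}"
    and no_edge: "\<And>u v. u \<in> L \<Longrightarrow> v \<in> R \<Longrightarrow> \<not> cox_adj G u v \<and> \<not> cox_adj G v u"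
    and clique: "\<And>u v. u \<in> C \<Longrightarrow> v \<in> C \<Longrightarrow> u \<noteq> v \<Longrightarrow> cox_adj G u v"
  shows "cox_chordal G (L \<union> C \<union> R)"
  unfolding cox_chordal_def
proof (intro allI impI)
  fix vs
  assume vs: "distinct vs \<and> 4 \<le> length vs \<and> set vs \<subseteq> L \<union> C \<union> R \<and>
    (\<forall>i<length vs. cox_adj G (vs ! i) (vs ! ((i + 1) mod length vs)))"
  show "\<exists>i j. i < length vs \<and> j < length vs \<and> i \<noteq> j \<and> j \<noteq> (i + 1) mod length vs \<and>
      i \<noteq> (j + 1) mod length vs \<and> cox_adj G (vs ! i) (vs ! j)"
  proof (cases "set vs \<subseteq> L \<union> C")
    case True
    show ?thesis
      by (rule mp[OF spec[OF chordal_LC[unfolded cox_chordal_def], of vs]]) (use vs True in simp)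
  next
    case not_LC: False
    show ?thesis
    proof (cases "set vs \<subseteq> C \<union> R")
      case True
      show ?thesis
        by (rule mp[OF spec[OF chordal_CR[unfolded cox_chordal_def], of vs]]) (use vs True in simp)
    next
      case False
      then obtain i where i: "i < length vs" "vs ! i \<in> L"
        using vs by (auto simp: subset_iff in_set_conv_nth)
      obtain j where j: "j < length vs" "vs ! j \<in> R"
        using not_LC vs by (auto simp: subset_iff in_set_conv_nth)
      obtain p q where pq: "p < length vs" "q < length vs" "p \<noteq> q"
        "q \<noteq> (p + 1) mod length vs" "p \<noteq> (q + 1) mod length vs"
        "vs ! p \<notin> L \<union> R" "vs ! q \<notin> L \<union> R"
        using cycle_separator_positions[of vs "cox_adj G" L R, OF _ _ no_edge \<open>L \<inter> R = {}\<close> i j] vs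
        by auto
      moreover have "vs ! p \<in> L \<union> C \<union> R" "vs ! q \<in> L \<union> C \<union> R"
        using vs pq(1,2) by (meson nth_mem subsetD)+
      ultimately have "vs ! p \<in> C" "vs ! q \<in> C" "vs ! p \<noteq> vs ! q"
        using vs nth_eq_iff_index_eq[of vs p q] by auto
      then show ?thesis using pq clique by blast
    qed
  qed
qed

section \<open>The twisted system\<close>

context group begin

lemma cox_chordal_conjugate:
  assumes "cox_chordal G S" "S \<subseteq> carrier G" "g \<in> carrier G"
  shows "cox_chordal G ((\<lambda>s. g \<otimes> s \<otimes> inv g) ` S)"
proof (rule cox_chordal_image[OF assms(1)])
  show "inj_on (\<lambda>s. g \<otimes> s \<otimes> inv g) S"
    using assms(2,3) by (auto simp: inj_on_def subset_iff)
  show "cox_adj G (g \<otimes> u \<otimes> inv g) (g \<otimes> v \<otimes> inv g) \<longleftrightarrow> cox_adj G u v" if "u \<in> S" "v \<in> S" for u v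
    using that assms(2,3) cox_adj_conjugate by (auto simp: subset_iff)
qed

lemma twisted_separation_not_adj:
  assumes cs: "coxeter_system G S" and sep: "cox_separation G S S1 S0 S2"
    and d: "d \<in> generate G S2" "(\<lambda>s. inv d \<otimes> s \<otimes> d) ` S0 \<subseteq> S2"
    and x: "x \<in> S1 - S0" and v: "v \<in> (\<lambda>s. d \<otimes> s \<otimes> inv d) ` S2 - S1"
  shows "\<not> cox_adj G x v"
proof -
  have S: "S = S1 \<union> S2" "S0 = S1 \<inter> S2" using sep by (auto simp: cox_separation_def)
  have S2_carrier: "S2 \<subseteq> carrier G" and "S0 \<subseteq> carrier G"
    using coxeter_system_carrier[OF cs] S by auto
  interpret S2: subgroup "generate G S2" G using generate_is_subgroup[OF S2_carrier] .
  have dc: "d \<in> carrier G" using generate_in_carrier[OF S2_carrier d(1)] .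
  interpret amalgam_normal_forms G "generate G S0"
    by (rule amalgam_normal_forms.intro[OF is_group])
      (simp add: amalgam_normal_forms_axioms_def generate_is_subgroup \<open>S0 \<subseteq> carrier G\<close>)
  obtain t where t: "t \<in> S2" "v = d \<otimes> t \<otimes> inv d" using v by blast
  have tc: "t \<in> carrier G" using t S2_carrier by auto
  have "x \<notin> generate G S0"
    using coxeter_generator_in_parabolic[OF cs, of S0 x] x S by auto
  moreover have "v \<in> generate G S2"
    using t d(1) generate.incl[of t S2 G] by simp
  moreover have "v \<notin> generate G S0"
  proof
    assume "v \<in> generate G S0"
    have "generate G ((\<lambda>s. inv d \<otimes> s \<otimes> d) ` S0) = (\<lambda>s. inv d \<otimes> s \<otimes> d) ` generate G S0"
      using generate_conjugate[of "inv d" S0] dc \<open>S0 \<subseteq> carrier G\<close> by simp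
    moreover have "inv d \<otimes> v \<otimes> d = t" using t tc dc by (simp add: m_assoc inv_mult_cancel_left)
    ultimately have "t \<in> generate G ((\<lambda>s. inv d \<otimes> s \<otimes> d) ` S0)"
      using \<open>v \<in> generate G S0\<close> by (metis image_eqI)
    then have "t \<in> (\<lambda>s. inv d \<otimes> s \<otimes> d) ` S0"
      using coxeter_generator_in_parabolic[OF cs] d(2) t S by blast
    then obtain s0 where "s0 \<in> S0" "t = inv d \<otimes> s0 \<otimes> d" by blast
    then have "v = s0" using t dc \<open>S0 \<subseteq> carrier G\<close> by (auto simp: m_assoc mult_inv_cancel_left)
    then show False using v \<open>s0 \<in> S0\<close> S by auto
  qed
  ultimately have "ord (x \<otimes> v) = 0"
    using cox_separation_ord_eq_0[OF cs sep, of x v] x by (auto intro: generate.incl)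
  then show ?thesis by (simp add: cox_adj_def cox_finite_def cox_m_def)
qed

end

theorem lemma3p2:
  fixes W :: "('a, 'b) monoid_scheme" and S S1 S0 S2 :: "'a set" and d :: 'a
  assumes "coxeter_system W S"
    and "cox_chordal W S"
    and "cox_separation W S S1 S0 S2"
    and "cox_simplex W S S0"
    and "d \<in> generate W S2"
    and "(\<lambda>s. inv\<^bsub>W\<^esub> d \<otimes>\<^bsub>W\<^esub> s \<otimes>\<^bsub>W\<^esub> d) ` S0 \<subseteq> S2"
  shows "cox_chordal W (S1 \<union> (\<lambda>s. d \<otimes>\<^bsub>W\<^esub> s \<otimes>\<^bsub>W\<^esub> inv\<^bsub>W\<^esub> d) ` S2)"
proof -
  interpret group W using assms(1) by (rule coxeter_system_group)
  define T where "T = (\<lambda>s. d \<otimes>\<^bsub>W\<^esub> s \<otimes>\<^bsub>W\<^esub> inv\<^bsub>W\<^esub> d) ` S2"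
  have S: "S = S1 \<union> S2" "S0 = S1 \<inter> S2" "S \<subseteq> carrier W"
    using assms(3) coxeter_system_carrier[OF assms(1)] by (auto simp: cox_separation_def)
  have d: "d \<in> carrier W" using generate_in_carrier[OF _ assms(5)] S by auto
  have T_carrier: "T \<subseteq> carrier W" using S d by (auto simp: T_def)
  have "S0 \<subseteq> T"
  proof
    fix s assume "s \<in> S0"
    then have "s = d \<otimes>\<^bsub>W\<^esub> (inv\<^bsub>W\<^esub> d \<otimes>\<^bsub>W\<^esub> s \<otimes>\<^bsub>W\<^esub> d) \<otimes>\<^bsub>W\<^esub> inv\<^bsub>W\<^esub> d"
      using d S by (auto simp: m_assoc mult_inv_cancel_left)
    then show "s \<in> T" unfolding T_def by (rule image_eqI) (use assms(6) \<open>s \<in> S0\<close> in auto)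
  qed
  have "cox_chordal W ((S1 - S0) \<union> S0 \<union> (T - S1))"
  proof (rule cox_chordal_clique_sum)
    show "cox_chordal W ((S1 - S0) \<union> S0)"
      by (rule cox_chordal_subset[OF assms(2)]) (use S in auto)
    have "cox_chordal W T" unfolding T_def
      by (rule cox_chordal_conjugate[OF cox_chordal_subset[OF assms(2)]]) (use S d in auto)
    then show "cox_chordal W (S0 \<union> (T - S1))"
      by (rule cox_chordal_subset) (use \<open>S0 \<subseteq> T\<close> in auto)
    show "\<not> cox_adj W u v \<and> \<not> cox_adj W v u" if "u \<in> S1 - S0" "v \<in> T - S1" for u v
    proof -
      have "\<not> cox_adj W u v"
        by (rule twisted_separation_not_adj[OF assms(1,3,5,6) that(1) that(2)[unfolded T_def]])
      moreover have "u \<in> carrier W" "v \<in> carrier W" using that S T_carrier by auto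
      ultimately show ?thesis using cox_adj_commute by simp
    qed
    show "cox_adj W u v" if "u \<in> S0" "v \<in> S0" "u \<noteq> v" for u v
      using assms(4) that by (simp add: cox_simplex_def cox_adj_def)
  qed auto
  moreover have "(S1 - S0) \<union> S0 \<union> (T - S1) = S1 \<union> T" using S by auto
  ultimately show ?thesis by (simp add: T_def)
qed

end
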